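(* Let $1\le t\le n$. The Alexander dual $I_t(L_n)^\vee$ has minimal monomial generating set $\{x_F: F\in C_{n,t}\}$. Writing $n=(t+1)p+q$ with $0\le q\le t$, the largest degree of a minimal generator of $I_t(L_n)^\vee$ equals $2p$ if $q<t$ and $2p+1$ if $q=t$.
   Context: $K$ is a field, $S=K[x_1,\ldots,x_n]$, $I_t(L_n)=(u_1,\ldots,u_{n-t+1})$ with $u_i=x_ix_{i+1}\cdots x_{i+t-1}$, $x_F=\prod_{i\in F}x_i$. The Alexander dual of a squarefree monomial ideal with minimal generators $x_{G_1},\ldots,x_{G_m}$ is generated by all $x_C$ where $C\subseteq[n]$ meets every $G_j$. $C_{n,t}$ is the set of subsets $\{i_1<\cdots<i_r\}\subseteq[n]$ with: (1) $1\le i_1\le t$; (2) $i_2>t$; (3) $1\le i_{j+1}-i_j\le t$ for $1\le j\le r-1$; (4) $i_{j+2}-i_j>t$ for $1\le j\le r-2$; (5) $i_{r-1}<n-t+1$; (6) $n-t+1\le i_r\le n$ (conditions referring to nonexistent indices are vacuous). *)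

theory Defs
  imports Main
begin

text \<open>Squarefree monomials x_F in K[x_1,...,x_n] are represented by their supports
  F \<subseteq> {1..n}; divisibility x_F | x_G is F \<subseteq> G and deg x_F = card F.
  A squarefree monomial ideal is represented by the supports of a generating set.\<close>

text \<open>Supports of the generators u_i = x_i x_(i+1) ... x_(i+t-1) of I_t(L_n).\<close>
definition path_gens :: "nat \<Rightarrow> nat \<Rightarrow> nat set set" where
  "path_gens n t = {{i..i + t - 1} | i. 1 \<le> i \<and> i \<le> n - t + 1}"

text \<open>Supports of the generators x_C of the Alexander dual: all C \<subseteq> [n] meeting every G_j.\<close>
definition alex_dual_gens :: "nat \<Rightarrow> nat set set \<Rightarrow> nat set set" where
  "alex_dual_gens n G = {C. C \<subseteq> {1..n} \<and> (\<forall>g\<in>G. C \<inter> g \<noteq> {})}"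

text \<open>Minimal monomial generating set of the monomial ideal generated by the x_C, C \<in> S:
  the divisibility-minimal (= inclusion-minimal) elements.\<close>
definition minimal_gens :: "nat set set \<Rightarrow> nat set set" where
  "minimal_gens S = {C \<in> S. \<forall>D\<in>S. D \<subseteq> C \<longrightarrow> D = C}"

text \<open>The set C_{n,t}; xs ! j is i_(j+1) (0-indexed list of the sorted elements).\<close>
definition C_set :: "nat \<Rightarrow> nat \<Rightarrow> nat set set" where
  "C_set n t = {F. F \<subseteq> {1..n} \<and>
     (let xs = sorted_list_of_set F; r = length xs in
        r \<ge> 1 \<and>
        1 \<le> xs ! 0 \<and> xs ! 0 \<le> t \<and>
        (r \<ge> 2 \<longrightarrow> xs ! 1 > t) \<and>
        (\<forall>j. j + 1 < r \<longrightarrow> 1 \<le> xs ! (j+1) - xs ! j \<and> xs ! (j+1) - xs ! j \<le> t) \<and>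
        (\<forall>j. j + 2 < r \<longrightarrow> xs ! (j+2) - xs ! j > t) \<and>
        (r \<ge> 2 \<longrightarrow> xs ! (r - 2) < n - t + 1) \<and>
        n - t + 1 \<le> xs ! (r - 1) \<and> xs ! (r - 1) \<le> n)}"

end

theory Submission
  imports Defs
begin

text \<open>A set \<open>C \<subseteq> [n]\<close> generates the Alexander dual iff it meets every window
  \<open>{i..i+t-1}\<close>. This property is upward closed, so the minimal generators are the covers from
  which no single element can be removed. An element of a cover is removable iff every window
  through it contains another element; for the increasing enumeration \<open>i\<^sub>1 < \<dots> < i\<^sub>r\<close>
  this becomes the local conditions defining \<open>C\<^sub>n\<^sub>,\<^sub>t\<close>. The condition
  \<open>i\<^sub>j\<^sub>+\<^sub>2 > i\<^sub>j + t\<close> bounds every such list from below by the greedy list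
  \<open>1, t+1, t+2, 2t+2, 2t+3, \<dots>\<close>, so the largest generator is the longest prefix of the greedy
  list that still satisfies the boundary conditions at \<open>n\<close>.\<close>

lemma strict_sorted_nth_less_iff:
  assumes "sorted_wrt (<) (xs :: 'a :: linorder list)" "i < length xs" "j < length xs"
  shows "xs ! i < xs ! j \<longleftrightarrow> i < j"
proof
  assume "xs ! i < xs ! j"
  then show "i < j"
    using sorted_wrt_nth_less[OF assms(1), of j i] assms by (metis linorder_neqE_nat order.asym)
qed (use sorted_wrt_nth_less assms in auto)

lemma strict_sorted_nth_le_iff:
  "sorted_wrt (<) (xs :: 'a :: linorder list) \<Longrightarrow> i < length xs \<Longrightarrow> j < length xs \<Longrightarrow>
     xs ! i \<le> xs ! j \<longleftrightarrow> i \<le> j"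
  by (meson not_le strict_sorted_nth_less_iff)

lemma minimal_gens_upward_closed:
  assumes mono: "\<And>C D. P C \<Longrightarrow> C \<subseteq> D \<Longrightarrow> P D"
  shows "minimal_gens {C. C \<subseteq> A \<and> P C} = {C. C \<subseteq> A \<and> P C \<and> (\<forall>x\<in>C. \<not> P (C - {x}))}"
proof -
  have "(\<forall>D. D \<subseteq> A \<and> P D \<longrightarrow> D \<subseteq> C \<longrightarrow> D = C) \<longleftrightarrow> (\<forall>x\<in>C. \<not> P (C - {x}))"
    if "C \<subseteq> A" for C
  proof
    assume "\<forall>D. D \<subseteq> A \<and> P D \<longrightarrow> D \<subseteq> C \<longrightarrow> D = C"
    then show "\<forall>x\<in>C. \<not> P (C - {x})"
      using that by blast
  next
    assume irred: "\<forall>x\<in>C. \<not> P (C - {x})"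
    show "\<forall>D. D \<subseteq> A \<and> P D \<longrightarrow> D \<subseteq> C \<longrightarrow> D = C"
    proof (intro allI impI)
      fix D assume D: "D \<subseteq> A \<and> P D" "D \<subseteq> C"
      show "D = C"
      proof (rule ccontr)
        assume "D \<noteq> C"
        then obtain x where "x \<in> C" "D \<subseteq> C - {x}"
          using D(2) by blast
        then show False
          using irred mono D(1) by blast
      qed
    qed
  qed
  then show ?thesis
    unfolding minimal_gens_def by auto
qed

definition covers_windows :: "nat \<Rightarrow> nat \<Rightarrow> nat set \<Rightarrow> bool" where
  "covers_windows n t C \<longleftrightarrow> (\<forall>i. 1 \<le> i \<and> i \<le> n - t + 1 \<longrightarrow> (\<exists>c\<in>C. i \<le> c \<and> c \<le> i + t - 1))"

lemma covers_windows_mono: "covers_windows n t C \<Longrightarrow> C \<subseteq> D \<Longrightarrow> covers_windows n t D"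
  unfolding covers_windows_def by blast

lemma alex_dual_gens_path_gens:
  "alex_dual_gens n (path_gens n t) = {C. C \<subseteq> {1..n} \<and> covers_windows n t C}"
proof -
  have "(\<forall>g\<in>path_gens n t. C \<inter> g \<noteq> {}) \<longleftrightarrow> covers_windows n t C" for C
  proof -
    have "(\<forall>g\<in>path_gens n t. C \<inter> g \<noteq> {}) \<longleftrightarrow>
        (\<forall>i. 1 \<le> i \<and> i \<le> n - t + 1 \<longrightarrow> C \<inter> {i..i + t - 1} \<noteq> {})"
      unfolding path_gens_def by blast
    then show ?thesis
      unfolding covers_windows_def by (simp add: disjoint_iff Bex_def)
  qed
  then show ?thesis
    unfolding alex_dual_gens_def by blast
qed

lemma minimal_gens_alex_dual_path_gens:
  "minimal_gens (alex_dual_gens n (path_gens n t)) =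
     {C. C \<subseteq> {1..n} \<and> covers_windows n t C \<and> (\<forall>x\<in>C. \<not> covers_windows n t (C - {x}))}"
  unfolding alex_dual_gens_path_gens by (rule minimal_gens_upward_closed) (rule covers_windows_mono)

lemma covers_windows_remove:
  assumes "covers_windows n t C" and "x \<in> C"
    and "\<And>i. 1 \<le> i \<Longrightarrow> i \<le> n - t + 1 \<Longrightarrow> i \<le> x \<Longrightarrow> x \<le> i + t - 1 \<Longrightarrow>
           \<exists>y\<in>C - {x}. i \<le> y \<and> y \<le> i + t - 1"
  shows "covers_windows n t (C - {x})"
  using assms unfolding covers_windows_def by (metis DiffI singletonD)

lemma not_covers_windows_if_gap:
  assumes "1 \<le> i" "i \<le> n - t + 1" "\<forall>y\<in>C. y < i \<or> i + t - 1 < y"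
  shows "\<not> covers_windows n t C"
  using assms unfolding covers_windows_def by force

text \<open>The conditions defining \<open>C\<^sub>n\<^sub>,\<^sub>t\<close> for the increasing list of elements, with the
  differences moved across so that no truncated subtraction occurs.\<close>

definition irredundant_cover_list :: "nat \<Rightarrow> nat \<Rightarrow> nat list \<Rightarrow> bool" where
  "irredundant_cover_list n t xs \<longleftrightarrow>
     xs \<noteq> [] \<and> xs ! 0 \<le> t \<and> (2 \<le> length xs \<longrightarrow> t < xs ! 1) \<and>
     (\<forall>j. j + 1 < length xs \<longrightarrow> xs ! (j + 1) \<le> xs ! j + t) \<and>
     (\<forall>j. j + 2 < length xs \<longrightarrow> xs ! j + t < xs ! (j + 2)) \<and>
     (2 \<le> length xs \<longrightarrow> xs ! (length xs - 2) < n - t + 1) \<and>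
     n - t + 1 \<le> xs ! (length xs - 1)"

context
  fixes n t :: nat and xs :: "nat list"
  assumes sorted: "sorted_wrt (<) xs" and bounded: "set xs \<subseteq> {1..n}"
begin

lemma cover_list_nth_bounds: "k < length xs \<Longrightarrow> 1 \<le> xs ! k \<and> xs ! k \<le> n"
  using bounded nth_mem by fastforce

lemma covers_windows_if_irredundant_cover_list:
  assumes L: "irredundant_cover_list n t xs"
  shows "covers_windows n t (set xs)"
  unfolding covers_windows_def
proof (intro allI impI)
  fix i assume i: "1 \<le> i \<and> i \<le> n - t + 1"
  define k where "k = (LEAST k. k < length xs \<and> i \<le> xs ! k)"
  have "length xs - 1 < length xs \<and> i \<le> xs ! (length xs - 1)"
    using L i unfolding irredundant_cover_list_def by auto
  then have k: "k < length xs" "i \<le> xs ! k"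
    unfolding k_def by (metis (mono_tags, lifting) LeastI)+
  have "xs ! k \<le> i + t - 1"
  proof (cases k)
    case 0
    then show ?thesis using L i unfolding irredundant_cover_list_def by auto
  next
    case (Suc m)
    have "\<not> (m < length xs \<and> i \<le> xs ! m)"
      using not_less_Least[of m "\<lambda>k. k < length xs \<and> i \<le> xs ! k"] Suc unfolding k_def by simp
    moreover have "xs ! (m + 1) \<le> xs ! m + t"
      using L k Suc unfolding irredundant_cover_list_def by auto
    ultimately show ?thesis using k Suc by auto
  qed
  then show "\<exists>c\<in>set xs. i \<le> c \<and> c \<le> i + t - 1"
    using k by auto
qed

lemma not_covers_windows_remove_if_irredundant_cover_list:
  assumes L: "irredundant_cover_list n t xs" and k: "k < length xs"
  shows "\<not> covers_windows n t (set xs - {xs ! k})"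
proof -
  let ?r = "length xs"
  have other: "\<exists>m<?r. m \<noteq> k \<and> y = xs ! m" if "y \<in> set xs - {xs ! k}" for y
    using that by (metis DiffE in_set_conv_nth singletonI)
  note le_iff = strict_sorted_nth_le_iff[OF sorted]
  consider "k = 0" | "0 < k" "k = ?r - 1" | "0 < k" "k + 1 < ?r"
    using k by linarith
  then show ?thesis
  proof cases
    case 1
    have "t < y" if y: "y \<in> set xs - {xs ! k}" for y
    proof -
      obtain m where m: "m < ?r" "m \<noteq> 0" "y = xs ! m" using other[OF y] 1 by blast
      then have "xs ! 1 \<le> xs ! m" using le_iff by simp
      then show ?thesis using L m unfolding irredundant_cover_list_def by simp
    qed
    then show ?thesis by (intro not_covers_windows_if_gap[of 1]) auto
  next
    case 2
    have "y < n - t + 1" if y: "y \<in> set xs - {xs ! k}" for y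
    proof -
      obtain m where m: "m < ?r" "m \<noteq> k" "y = xs ! m" using other[OF y] by blast
      then have "xs ! m \<le> xs ! (?r - 2)" using le_iff 2 by simp
      then show ?thesis using L m 2 unfolding irredundant_cover_list_def by simp
    qed
    then show ?thesis by (intro not_covers_windows_if_gap[of "n - t + 1"]) auto
  next
    case 3
    let ?i = "xs ! (k - 1) + 1"
    have jump: "xs ! (k - 1) + t < xs ! (k + 1)"
    proof -
      have "\<forall>j. j + 2 < ?r \<longrightarrow> xs ! j + t < xs ! (j + 2)"
        using L unfolding irredundant_cover_list_def by blast
      moreover have "k - 1 + 2 = k + 1" using 3 by simp
      ultimately show ?thesis using 3 by metis
    qed
    have "?i \<le> n - t + 1" using jump cover_list_nth_bounds[of "k + 1"] 3 by simp
    moreover have "y < ?i \<or> ?i + t - 1 < y" if y: "y \<in> set xs - {xs ! k}" for y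
    proof -
      obtain m where m: "m < ?r" "m \<noteq> k" "y = xs ! m" using other[OF y] by blast
      then consider "m \<le> k - 1" | "k + 1 \<le> m" by linarith
      then show ?thesis
      proof cases
        case 1
        then show ?thesis using le_iff[of m "k - 1"] m k by (simp add: less_imp_diff_less)
      next
        case 2
        then show ?thesis using le_iff[of "k + 1" m] m 3 jump by simp
      qed
    qed
    ultimately show ?thesis by (intro not_covers_windows_if_gap[of ?i]) auto
  qed
qed

context
  assumes covers: "covers_windows n t (set xs)"
    and irredundant: "\<forall>x\<in>set xs. \<not> covers_windows n t (set xs - {x})"
begin

lemma window_meets_list:
  assumes "1 \<le> i" "i \<le> n - t + 1"
  obtains m where "m < length xs" "i \<le> xs ! m" "xs ! m \<le> i + t - 1"
  using covers assms unfolding covers_windows_def by (metis in_set_conv_nth)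

lemma exists_private_window:
  assumes k: "k < length xs"
  obtains i where "1 \<le> i" "i \<le> n - t + 1" "i \<le> xs ! k" "xs ! k \<le> i + t - 1"
    and "\<And>m. m < length xs \<Longrightarrow> m \<noteq> k \<Longrightarrow> xs ! m < i \<or> i + t - 1 < xs ! m"
proof (rule ccontr)
  note window_found = that
  assume no_private: "\<not> thesis"
  have "covers_windows n t (set xs - {xs ! k})"
  proof (rule covers_windows_remove[OF covers nth_mem[OF k]])
    fix i assume i: "1 \<le> i" "i \<le> n - t + 1" "i \<le> xs ! k" "xs ! k \<le> i + t - 1"
    then obtain m where m: "m < length xs" "m \<noteq> k" "i \<le> xs ! m" "xs ! m \<le> i + t - 1"
      using window_found no_private by (meson not_le)
    moreover have "xs ! m \<noteq> xs ! k"
      using m k sorted by (simp add: nth_eq_iff_index_eq strict_sorted_iff)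
    ultimately show "\<exists>y\<in>set xs - {xs ! k}. i \<le> y \<and> y \<le> i + t - 1"
      by (metis DiffI nth_mem singletonD)
  qed
  then show False
    using irredundant k by simp
qed

lemma irredundant_cover_first: "xs \<noteq> [] \<and> xs ! 0 \<le> t"
proof -
  obtain m where m: "m < length xs" "xs ! m \<le> t"
    using window_meets_list[of 1] by auto
  moreover from m have "xs \<noteq> []"
    by auto
  ultimately show ?thesis
    using strict_sorted_nth_le_iff[OF sorted, of 0 m] by simp
qed

lemma irredundant_cover_last: "n - t + 1 \<le> xs ! (length xs - 1)"
proof -
  obtain m where m: "m < length xs" "n - t + 1 \<le> xs ! m"
    using window_meets_list[of "n - t + 1"] by auto
  moreover have "m \<le> length xs - 1" "length xs - 1 < length xs"
    using m by simp_all
  ultimately show ?thesis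
    using strict_sorted_nth_le_iff[OF sorted, of m "length xs - 1"] by simp
qed

lemma irredundant_cover_second:
  assumes r: "2 \<le> length xs"
  shows "t < xs ! 1"
proof -
  obtain i where i: "1 \<le> i" "i \<le> xs ! 0"
    and others: "\<And>m. m < length xs \<Longrightarrow> m \<noteq> 0 \<Longrightarrow> xs ! m < i \<or> i + t - 1 < xs ! m"
    by (rule exists_private_window[of 0]) (use r in auto)
  have "xs ! 1 < i \<or> i + t - 1 < xs ! 1"
    using others[of 1] r by simp
  moreover have "xs ! 0 < xs ! 1"
    using sorted_wrt_nth_less[OF sorted, of 0 1] r by simp
  ultimately show ?thesis
    using i by linarith
qed

lemma irredundant_cover_penultimate:
  assumes r: "2 \<le> length xs"
  shows "xs ! (length xs - 2) < n - t + 1"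
proof -
  let ?r = "length xs"
  obtain i where i: "i \<le> n - t + 1" "xs ! (?r - 1) \<le> i + t - 1"
    and others: "\<And>m. m < ?r \<Longrightarrow> m \<noteq> ?r - 1 \<Longrightarrow> xs ! m < i \<or> i + t - 1 < xs ! m"
    by (rule exists_private_window[of "?r - 1"]) (use r in auto)
  have "xs ! (?r - 2) < i \<or> i + t - 1 < xs ! (?r - 2)"
    using others[of "?r - 2"] r by simp
  moreover have "xs ! (?r - 2) < xs ! (?r - 1)"
    using strict_sorted_nth_less_iff[OF sorted, of "?r - 2" "?r - 1"] r by simp
  ultimately show ?thesis
    using i by linarith
qed

lemma irredundant_cover_step_le:
  assumes j: "j + 1 < length xs"
  shows "xs ! (j + 1) \<le> xs ! j + t"
proof (rule ccontr)
  assume gap: "\<not> xs ! (j + 1) \<le> xs ! j + t"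
  then have window: "xs ! j + 1 \<le> n - t + 1"
    using cover_list_nth_bounds[OF j] by auto
  obtain m where m: "m < length xs" "xs ! j + 1 \<le> xs ! m" "xs ! m \<le> xs ! j + 1 + t - 1"
    by (rule window_meets_list[of "xs ! j + 1"]) (use window in simp_all)
  then have "j < m" "m < j + 1"
    using strict_sorted_nth_less_iff[OF sorted, of j m]
      strict_sorted_nth_less_iff[OF sorted, of m "j + 1"] gap j by auto
  then show False
    by simp
qed

lemma irredundant_cover_jump_gt:
  assumes j: "j + 2 < length xs"
  shows "xs ! j + t < xs ! (j + 2)"
proof -
  obtain i where i: "i \<le> xs ! (j + 1)" "xs ! (j + 1) \<le> i + t - 1"
    and others: "\<And>m. m < length xs \<Longrightarrow> m \<noteq> j + 1 \<Longrightarrow> xs ! m < i \<or> i + t - 1 < xs ! m"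
    by (rule exists_private_window[of "j + 1"]) (use j in auto)
  have "xs ! j < i \<or> i + t - 1 < xs ! j" "xs ! (j + 2) < i \<or> i + t - 1 < xs ! (j + 2)"
    using others[of j] others[of "j + 2"] j by simp_all
  moreover have "xs ! j < xs ! (j + 1)" "xs ! (j + 1) < xs ! (j + 2)"
    using strict_sorted_nth_less_iff[OF sorted, of j "j + 1"]
      strict_sorted_nth_less_iff[OF sorted, of "j + 1" "j + 2"] j by simp_all
  ultimately show ?thesis
    using i by linarith
qed

lemma irredundant_cover_list_if_irredundant: "irredundant_cover_list n t xs"
  unfolding irredundant_cover_list_def
  using irredundant_cover_first irredundant_cover_second irredundant_cover_step_le
    irredundant_cover_jump_gt irredundant_cover_penultimate irredundant_cover_last
  by blast

end

end

lemma irredundant_cover_list_iff: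
  assumes "sorted_wrt (<) xs" and "set xs \<subseteq> {1..n}"
  shows "irredundant_cover_list n t xs \<longleftrightarrow>
    covers_windows n t (set xs) \<and> (\<forall>x\<in>set xs. \<not> covers_windows n t (set xs - {x}))"
  using covers_windows_if_irredundant_cover_list[OF assms]
    not_covers_windows_remove_if_irredundant_cover_list[OF assms]
    irredundant_cover_list_if_irredundant[OF assms]
  by (metis in_set_conv_nth)

lemma C_set_eq:
  "C_set n t = {C. C \<subseteq> {1..n} \<and> irredundant_cover_list n t (sorted_list_of_set C)}"
proof -
  have "C \<in> C_set n t \<longleftrightarrow> irredundant_cover_list n t (sorted_list_of_set C)"
    if C: "C \<subseteq> {1..n}" for C
  proof -
    define xs where "xs = sorted_list_of_set C"
    have "set xs = C"
      using C finite_subset[OF C] unfolding xs_def by simp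
    then have bounded: "\<And>k. k < length xs \<Longrightarrow> 1 \<le> xs ! k \<and> xs ! k \<le> n"
      using C nth_mem by fastforce
    have increasing: "\<And>j. j + 1 < length xs \<Longrightarrow> xs ! j < xs ! (j + 1)"
      and increasing2: "\<And>j. j + 2 < length xs \<Longrightarrow> xs ! j < xs ! (j + 2)"
      using sorted_wrt_nth_less[OF strict_sorted_list_of_set[of C, folded xs_def]] by simp_all
    have "C \<in> C_set n t \<longleftrightarrow>
      1 \<le> length xs \<and> 1 \<le> xs ! 0 \<and> xs ! 0 \<le> t \<and> (2 \<le> length xs \<longrightarrow> t < xs ! 1) \<and>
      (\<forall>j. j + 1 < length xs \<longrightarrow> 1 \<le> xs ! (j + 1) - xs ! j \<and> xs ! (j + 1) - xs ! j \<le> t) \<and>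
      (\<forall>j. j + 2 < length xs \<longrightarrow> t < xs ! (j + 2) - xs ! j) \<and>
      (2 \<le> length xs \<longrightarrow> xs ! (length xs - 2) < n - t + 1) \<and>
      n - t + 1 \<le> xs ! (length xs - 1) \<and> xs ! (length xs - 1) \<le> n"
      using C unfolding C_set_def xs_def Let_def by simp
    also have "\<dots> \<longleftrightarrow> irredundant_cover_list n t xs"
    proof -
      have "(1 \<le> xs ! (j + 1) - xs ! j \<and> xs ! (j + 1) - xs ! j \<le> t) \<longleftrightarrow> xs ! (j + 1) \<le> xs ! j + t"
        if "j + 1 < length xs" for j
        using increasing[OF that] by linarith
      moreover have "t < xs ! (j + 2) - xs ! j \<longleftrightarrow> xs ! j + t < xs ! (j + 2)"
        if "j + 2 < length xs" for j
        using increasing2[OF that] by linarith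
      moreover have "xs \<noteq> [] \<Longrightarrow> 1 \<le> xs ! 0 \<and> xs ! (length xs - 1) \<le> n"
        using bounded by simp
      ultimately show ?thesis
        unfolding irredundant_cover_list_def by (metis One_nat_def Suc_le_eq length_greater_0_conv)
    qed
    finally show ?thesis unfolding xs_def .
  qed
  then show ?thesis
    unfolding C_set_def by blast
qed

lemma minimal_gens_alex_dual_path_gens_eq_C_set:
  "minimal_gens (alex_dual_gens n (path_gens n t)) = C_set n t"
  unfolding minimal_gens_alex_dual_path_gens C_set_eq
  using irredundant_cover_list_iff[OF strict_sorted_list_of_set]
  by (metis (no_types, lifting) finite_atLeastAtMost finite_subset set_sorted_list_of_set)

definition greedy_cover :: "nat \<Rightarrow> nat \<Rightarrow> nat" where
  "greedy_cover t j = j div 2 * (t + 1) + (if even j then 1 else t + 1)"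

lemma greedy_cover_Suc: "greedy_cover t (Suc j) = greedy_cover t j + (if even j then t else 1)"
  unfolding greedy_cover_def by (cases "even j") (auto elim: oddE)

lemma greedy_cover_add_2: "greedy_cover t (j + 2) = greedy_cover t j + t + 1"
  unfolding greedy_cover_def by simp

lemma strict_mono_greedy_cover: "1 \<le> t \<Longrightarrow> strict_mono (greedy_cover t)"
  unfolding strict_mono_Suc_iff by (simp add: greedy_cover_Suc)

lemma greedy_cover_le_nth:
  assumes L: "irredundant_cover_list n t xs" and bounded: "set xs \<subseteq> {1..n}" and j: "j < length xs"
  shows "greedy_cover t j \<le> xs ! j"
  using j
proof (induction j rule: less_induct)
  case (less j)
  consider "j = 0" | "j = 1" | i where "j = i + 2"
    by (metis One_nat_def add_2_eq_Suc' not0_implies_Suc)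
  then show ?case
  proof cases
    case 1
    then show ?thesis using bounded less.prems nth_mem by (fastforce simp: greedy_cover_def)
  next
    case 2
    then show ?thesis using L less.prems by (simp add: greedy_cover_def irredundant_cover_list_def)
  next
    case 3
    have "greedy_cover t i \<le> xs ! i"
      using less.IH 3 less.prems by simp
    moreover have "xs ! i + t < xs ! (i + 2)"
      using L less.prems 3 unfolding irredundant_cover_list_def by blast
    ultimately show ?thesis
      unfolding 3 using greedy_cover_add_2[of t i] by linarith
  qed
qed

definition max_cover_size :: "nat \<Rightarrow> nat \<Rightarrow> nat" where
  "max_cover_size n t =
     (if n mod (t + 1) < t then 2 * (n div (t + 1)) else 2 * (n div (t + 1)) + 1)"

lemma le_max_cover_size_if_greedy_fits:
  assumes "t \<le> n" and "1 \<le> r" and last: "greedy_cover t (r - 1) \<le> n"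
    and penultimate: "2 \<le> r \<longrightarrow> greedy_cover t (r - 2) < n - t + 1"
  shows "r \<le> max_cover_size n t"
proof -
  define p q where "p = n div (t + 1)" and "q = n mod (t + 1)"
  have n: "n = (t + 1) * p + q"
    unfolding p_def q_def by (metis div_mult_mod_eq mult.commute)
  have "q \<le> t"
    unfolding q_def using mod_less_divisor[of "t + 1" n] by simp
  have size: "max_cover_size n t = (if q < t then 2 * p else 2 * p + 1)"
    unfolding max_cover_size_def p_def q_def ..
  consider "r = 1" | m where "r = 2 * m + 2" | m where "r = 2 * m + 3"
  proof -
    have "r = 1 \<or> (\<exists>m. r = 2 * m + 2) \<or> (\<exists>m. r = 2 * m + 3)"
      using \<open>1 \<le> r\<close> by presburger
    then show ?thesis using that by blast
  qed
  then show ?thesis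
  proof cases
    case 1
    have "q < t \<Longrightarrow> 1 \<le> p"
      using \<open>t \<le> n\<close> n by (cases p) auto
    then show ?thesis using 1 size by auto
  next
    case (2 m)
    have "(m + 1) * (t + 1) \<le> n"
      using last 2 by (simp add: greedy_cover_def)
    then have "m + 1 \<le> p"
      unfolding p_def by (simp add: less_eq_div_iff_mult_less_eq)
    then show ?thesis using 2 size by auto
  next
    case (3 m)
    have "(m + 2) * (t + 1) \<le> q + 1 + (t + 1) * p"
      using penultimate 3 n \<open>t \<le> n\<close> by (simp add: greedy_cover_def algebra_simps)
    then have "m + 2 \<le> (q + 1 + (t + 1) * p) div (t + 1)"
      by (simp only: less_eq_div_iff_mult_less_eq zero_less_Suc add.commute[of t 1] plus_1_eq_Suc)
    also have "\<dots> = p + (q + 1) div (t + 1)"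
      by (rule div_mult_self2) simp
    also have "(q + 1) div (t + 1) = (if q < t then 0 else 1)"
      using \<open>q \<le> t\<close> by auto
    finally have "m + 2 \<le> (if q < t then p else p + 1)"
      by (simp split: if_splits)
    then show ?thesis
      using 3 size by (auto split: if_splits)
  qed
qed

lemma card_le_max_cover_size:
  assumes C: "C \<in> C_set n t" and "t \<le> n"
  shows "card C \<le> max_cover_size n t"
proof -
  define xs where "xs = sorted_list_of_set C"
  have L: "irredundant_cover_list n t xs" and bounded: "C \<subseteq> {1..n}"
    using C unfolding C_set_eq xs_def by auto
  then have "set xs \<subseteq> {1..n}"
    unfolding xs_def using finite_subset[OF bounded] by simp
  note greedy_le = greedy_cover_le_nth[OF L this]
  have nonempty: "xs \<noteq> []"
    using L unfolding irredundant_cover_list_def by simp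
  have "length xs \<le> max_cover_size n t"
  proof (rule le_max_cover_size_if_greedy_fits[OF \<open>t \<le> n\<close>])
    show "1 \<le> length xs"
      using nonempty by (simp add: Suc_le_eq)
    show "greedy_cover t (length xs - 1) \<le> n"
      using greedy_le[of "length xs - 1"] nth_mem[of "length xs - 1" xs] nonempty
        \<open>set xs \<subseteq> {1..n}\<close> by fastforce
    show "2 \<le> length xs \<longrightarrow> greedy_cover t (length xs - 2) < n - t + 1"
      using greedy_le[of "length xs - 2"] L unfolding irredundant_cover_list_def by auto
  qed
  then show ?thesis
    unfolding xs_def by simp
qed

lemma greedy_cover_fits_max_cover_size:
  assumes "1 \<le> t" "t \<le> n"
  defines "r \<equiv> max_cover_size n t"
  shows "1 \<le> r" "greedy_cover t (r - 1) \<le> n" "n - t + 1 \<le> greedy_cover t (r - 1)"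
    "2 \<le> r \<longrightarrow> greedy_cover t (r - 2) < n - t + 1"
proof -
  define p q where "p = n div (t + 1)" and "q = n mod (t + 1)"
  have n: "n = (t + 1) * p + q"
    unfolding p_def q_def by (metis div_mult_mod_eq mult.commute)
  have "q \<le> t"
    unfolding q_def using mod_less_divisor[of "t + 1" n] by simp
  have size: "max_cover_size n t = (if q < t then 2 * p else 2 * p + 1)"
    unfolding max_cover_size_def p_def q_def ..
  have "1 \<le> r \<and> greedy_cover t (r - 1) \<le> n \<and> n - t + 1 \<le> greedy_cover t (r - 1) \<and>
    (2 \<le> r \<longrightarrow> greedy_cover t (r - 2) < n - t + 1)"
  proof (cases "q < t")
    case True
    then obtain p' where p': "p = Suc p'"
      using \<open>t \<le> n\<close> n by (cases p) auto
    then have "r = 2 * p' + 2"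
      unfolding r_def size using True p' by simp
    then show ?thesis
      using n p' True by (simp add: greedy_cover_def algebra_simps)
  next
    case False
    then have "q = t"
      using \<open>q \<le> t\<close> by simp
    moreover have "r = 2 * p + 1"
      unfolding r_def size using False by simp
    ultimately show ?thesis
      using n \<open>1 \<le> t\<close> by (cases p) (simp_all add: greedy_cover_def algebra_simps)
  qed
  then show "1 \<le> r" "greedy_cover t (r - 1) \<le> n" "n - t + 1 \<le> greedy_cover t (r - 1)"
    "2 \<le> r \<longrightarrow> greedy_cover t (r - 2) < n - t + 1"
    by simp_all
qed

lemma irredundant_cover_list_greedy_cover:
  assumes "1 \<le> t" "1 \<le> r" "n - t + 1 \<le> greedy_cover t (r - 1)"
    "2 \<le> r \<longrightarrow> greedy_cover t (r - 2) < n - t + 1"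
  shows "irredundant_cover_list n t (map (greedy_cover t) [0..<r])"
  using assms unfolding irredundant_cover_list_def
  by (auto simp: greedy_cover_Suc greedy_cover_add_2 nth_append)
    (auto simp: greedy_cover_def)

lemma C_set_card_max_cover_size_attained:
  assumes "1 \<le> t" "t \<le> n"
  obtains C where "C \<in> C_set n t" "card C = max_cover_size n t"
proof -
  define r where "r = max_cover_size n t"
  define xs where "xs = map (greedy_cover t) [0..<r]"
  note fits = greedy_cover_fits_max_cover_size[OF assms, folded r_def]
  have L: "irredundant_cover_list n t xs"
    unfolding xs_def using irredundant_cover_list_greedy_cover[OF \<open>1 \<le> t\<close>] fits by blast
  have sorted: "sorted_wrt (<) xs"
    unfolding xs_def sorted_wrt_map using strict_mono_greedy_cover[OF \<open>1 \<le> t\<close>]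
    by (simp add: sorted_wrt_iff_nth_less strict_monoD)
  have bounded: "set xs \<subseteq> {1..n}"
  proof
    fix x assume "x \<in> set xs"
    then obtain j where j: "j < r" "x = greedy_cover t j"
      unfolding xs_def by auto
    then have "greedy_cover t j \<le> greedy_cover t (r - 1)"
      using strict_mono_greedy_cover[OF \<open>1 \<le> t\<close>] by (simp add: strict_mono_less_eq)
    then show "x \<in> {1..n}"
      using j fits(2) by (simp add: greedy_cover_def)
  qed
  have "set xs \<in> C_set n t"
    unfolding C_set_eq using bounded L sorted
    by (simp add: sorted_list_of_set.idem_if_sorted_distinct strict_sorted_iff)
  moreover have "card (set xs) = r"
  proof -
    have "distinct xs"
      using sorted strict_sorted_iff by blast
    then show ?thesis
      using distinct_card unfolding xs_def by fastforce
  qed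
  ultimately show ?thesis
    using that unfolding r_def by blast
qed

theorem corollary2p9:
  fixes n t :: nat
  assumes "1 \<le> t" and "t \<le> n"
  shows "minimal_gens (alex_dual_gens n (path_gens n t)) = C_set n t
       \<and> Max (card ` minimal_gens (alex_dual_gens n (path_gens n t)))
           = (if n mod (t + 1) < t then 2 * (n div (t + 1)) else 2 * (n div (t + 1)) + 1)"
proof -
  have "finite (C_set n t)"
    unfolding C_set_eq by (rule finite_subset[of _ "Pow {1..n}"]) auto
  moreover obtain C where "C \<in> C_set n t" "card C = max_cover_size n t"
    using C_set_card_max_cover_size_attained[OF assms] .
  ultimately have "Max (card ` C_set n t) = max_cover_size n t"
    using card_le_max_cover_size[OF _ \<open>t \<le> n\<close>] by (intro Max_eqI) force+
  then show ?thesis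
    unfolding minimal_gens_alex_dual_path_gens_eq_C_set max_cover_size_def by simp
qed

end
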